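(* Let $k>l\ge0$ be integers. Then for every pair of positive numbers $C_1<1$ and $C_2>1$ there exists $N\in\mathbb{N}$ such that for all $n\ge N$, $$C_1n^{(k+l)/2}\le\beta^{lk}_n<\beta^{kl}_n\le C_2n^{(k+l)/2}.$$
   Context: For integers $x$ and $s\ge0$, $(x,s)=x(x+1)\cdots(x+s-1)$ ($=1$ if $s=0$), with the convention $(x,s)=0$ whenever $x$ is a negative integer; for integers $n$ and $k,l\ge0$, $\beta^{kl}_n=\sqrt{(n-l+1,l)(n-l+1,k)}$. *)

theory Defs
  imports Complex_Main
begin

definition rpoch :: "int \<Rightarrow> nat \<Rightarrow> int" where
  "rpoch x s = (if x < 0 then 0 else (\<Prod>i<s. x + int i))"

definition beta :: "nat \<Rightarrow> nat \<Rightarrow> int \<Rightarrow> real" where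
  "beta k l n = sqrt (real_of_int (rpoch (n - int l + 1) l * rpoch (n - int l + 1) k))"

end

theory Submission
  imports Defs
begin

text \<open>Squared, beta^{kl}_n = (n-l+1,l)(n-l+1,k) is a product of rising factorials (n+a,s),
  and (n+a,s)/n^s = prod_{i<s} (1 + (a+i)/n) tends to 1. Hence beta^{kl}_n / n^{(k+l)/2} tends
  to 1 for all k and l, which yields the outer bounds. For the middle inequality put x = n-k+1
  and y = n-l+1: splitting off k-l factors gives (beta^{lk}_n)^2 = (x,k)(x,l) = (x,k-l)(y,l)(x,l)
  and (beta^{kl}_n)^2 = (y,l)(y,k) = (y,l)(y,l)(n+1,k-l), and these compare factor by factor.\<close>

lemma pochhammer_mono:
  fixes x y :: "'a :: linordered_semidom"
  assumes "0 \<le> x" "x \<le> y"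
  shows "pochhammer x n \<le> pochhammer y n"
  unfolding pochhammer_prod using assms by (intro prod_mono) auto

lemma pochhammer_strict_mono:
  fixes x y :: "'a :: linordered_semidom"
  assumes "0 < x" "x < y" "0 < n"
  shows "pochhammer x n < pochhammer y n"
proof -
  obtain m where n: "n = Suc m" using assms(3) by (cases n) auto
  have "pochhammer x m * (x + of_nat m) \<le> pochhammer y m * (x + of_nat m)"
    using assms by (intro mult_right_mono pochhammer_mono) auto
  also have "\<dots> < pochhammer y m * (y + of_nat m)"
    using assms by (intro mult_strict_left_mono pochhammer_pos) auto
  finally show ?thesis by (simp add: n pochhammer_Suc)
qed

lemma pochhammer_split_less:
  fixes x :: "'a :: linordered_semidom"
  assumes "0 < x" "0 < d"
  shows "pochhammer x (d + l) * pochhammer x l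
         < pochhammer (x + of_nat d) l * pochhammer (x + of_nat d) (l + d)"
proof -
  define y where "y = x + of_nat d"
  have "0 < y" using assms by (simp add: y_def add_pos_nonneg)
  have "x < y + of_nat l" using assms by (simp add: y_def add.assoc add_pos_nonneg)
  then have "pochhammer x d < pochhammer (y + of_nat l) d"
    using assms by (intro pochhammer_strict_mono) auto
  moreover have "pochhammer x l \<le> pochhammer y l"
    using assms by (intro pochhammer_mono) (auto simp: y_def)
  ultimately have "pochhammer x d * pochhammer x l < pochhammer (y + of_nat l) d * pochhammer y l"
    using assms \<open>0 < y\<close> by (intro mult_less_le_imp_less) (auto intro: pochhammer_pos less_imp_le)
  then have "pochhammer y l * (pochhammer x d * pochhammer x l)
           < pochhammer y l * (pochhammer (y + of_nat l) d * pochhammer y l)"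
    using \<open>0 < y\<close> by (intro mult_strict_left_mono pochhammer_pos)
  moreover have "pochhammer x (d + l) = pochhammer x d * pochhammer y l"
    by (simp add: pochhammer_product' y_def)
  moreover have "pochhammer y (l + d) = pochhammer y l * pochhammer (y + of_nat l) d"
    by (rule pochhammer_product')
  ultimately show ?thesis
    by (simp add: y_def[symmetric] ac_simps)
qed

lemma tendsto_pochhammer_over_power:
  "((\<lambda>n. pochhammer (real n + a) s / real n ^ s) \<longlongrightarrow> 1) sequentially"
proof -
  have "((\<lambda>n. \<Prod>i<s. 1 + (a + real i) / real n) \<longlongrightarrow> (\<Prod>i<s. 1 + 0)) sequentially"
    by (intro tendsto_prod tendsto_add tendsto_const lim_const_over_n)
  moreover have "eventually (\<lambda>n. (\<Prod>i<s. 1 + (a + real i) / real n)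
                   = pochhammer (real n + a) s / real n ^ s) sequentially"
    using eventually_gt_at_top[of 0]
  proof eventually_elim
    case (elim n)
    then have "(\<Prod>i<s. 1 + (a + real i) / real n) = (\<Prod>i<s. (real n + a + real i) / real n)"
      by (intro prod.cong) (auto simp: field_simps)
    then show ?case by (simp add: prod_dividef pochhammer_prod atLeast0LessThan add.assoc)
  qed
  ultimately show ?thesis by (simp add: tendsto_cong)
qed

lemma rpoch_eq_pochhammer: "0 \<le> x \<Longrightarrow> rpoch x s = pochhammer x s"
  by (simp add: rpoch_def pochhammer_prod atLeast0LessThan)

lemma beta_eq_sqrt_pochhammer:
  assumes "l \<le> n + 1"
  shows "beta k l (int n) = sqrt (pochhammer (real n - real l + 1) l * pochhammer (real n - real l + 1) k)"
proof -
  have "real_of_int (pochhammer (int n - int l + 1) s) = pochhammer (real n - real l + 1) s" for s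
    by (simp flip: pochhammer_of_int)
  then show ?thesis
    using assms by (simp add: beta_def rpoch_eq_pochhammer)
qed

lemma beta_less_beta:
  assumes "l < k" "k \<le> n"
  shows "beta l k (int n) < beta k l (int n)"
proof -
  define x where "x = real n - real k + 1"
  define y where "y = real n - real l + 1"
  have "y = x + of_nat (k - l)" "k = (k - l) + l" "0 < k - l" "0 < x"
    using assms by (simp_all add: x_def y_def)
  then have "pochhammer x k * pochhammer x l < pochhammer y l * pochhammer y k"
    using pochhammer_split_less[of x "k - l" l] by (simp add: add.commute[of l])
  then show ?thesis
    using assms by (simp add: beta_eq_sqrt_pochhammer x_def y_def)
qed

lemma tendsto_beta_over_power:
  "((\<lambda>n. beta k l (int n) / real n powr ((real k + real l) / 2)) \<longlongrightarrow> 1) sequentially"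
proof -
  let ?q = "\<lambda>s n. pochhammer (real n + (1 - real l)) s / real n ^ s"
  have "((\<lambda>n. sqrt (?q l n * ?q k n)) \<longlongrightarrow> sqrt (1 * 1)) sequentially"
    by (intro tendsto_real_sqrt tendsto_mult tendsto_pochhammer_over_power)
  moreover have "eventually (\<lambda>n. sqrt (?q l n * ?q k n)
                   = beta k l (int n) / real n powr ((real k + real l) / 2)) sequentially"
    using eventually_ge_at_top[of "Suc l"]
  proof eventually_elim
    case (elim n)
    then have "real n powr ((real k + real l) / 2) = (real n powr real (l + k)) powr (1 / 2)"
      by (simp add: powr_powr add.commute)
    also have "\<dots> = sqrt (real n ^ l * real n ^ k)"
      using elim by (simp only: powr_realpow of_nat_0_less_iff power_add) (simp add: powr_half_sqrt)
    finally show ?case using elim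
      by (simp add: beta_eq_sqrt_pochhammer real_sqrt_divide algebra_simps)
  qed
  ultimately show ?thesis by (simp add: tendsto_cong)
qed

theorem lemma2p9:
  fixes k l :: nat and C1 C2 :: real
  assumes "l < k" and "0 < C1" and "C1 < 1" and "1 < C2"
  shows "\<exists>N::nat. \<forall>n::nat. n \<ge> N \<longrightarrow>
           C1 * real n powr ((real k + real l) / 2) \<le> beta l k (int n)
         \<and> beta l k (int n) < beta k l (int n)
         \<and> beta k l (int n) \<le> C2 * real n powr ((real k + real l) / 2)"
proof -
  let ?p = "\<lambda>n. real n powr ((real k + real l) / 2)"
  have "eventually (\<lambda>n. C1 < beta l k (int n) / ?p n) sequentially"
    using order_tendstoD(1)[OF tendsto_beta_over_power[of l k]] assms
    by (simp add: add.commute)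
  moreover have "eventually (\<lambda>n. beta k l (int n) / ?p n < C2) sequentially"
    using order_tendstoD(2)[OF tendsto_beta_over_power[of k l]] assms by simp
  moreover have "eventually (\<lambda>n. k \<le> n \<and> 0 < n) sequentially"
    by (intro eventually_conj eventually_ge_at_top eventually_gt_at_top)
  ultimately have "eventually (\<lambda>n. C1 * ?p n \<le> beta l k (int n)
         \<and> beta l k (int n) < beta k l (int n) \<and> beta k l (int n) \<le> C2 * ?p n) sequentially"
    by eventually_elim
       (use assms(1) in \<open>auto simp: beta_less_beta pos_less_divide_eq pos_divide_less_eq\<close>)
  then show ?thesis by (simp add: eventually_sequentially)
qed

end
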